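(* Let $G$ be a connected graph on an odd number $n\geq 3$ of vertices. If there is a vertex $v\in V(G)$ such that each distance set $N_i(v)$, $i=1,\dots,\epsilon(v)$, is an independent set, then $q(G)\geq 3$.
   Context: For a graph $G$ on $n$ vertices, $\mathcal{S}(G)$ is the set of real symmetric $n\times n$ matrices $A=[a_{ij}]$ with $a_{ij}\neq0$ for $i\ne j$ iff $\{i,j\}\in E(G)$ (diagonal unrestricted); $q(G)$ is the minimum number of distinct eigenvalues of a matrix in $\mathcal{S}(G)$. $N_i(v)$ is the set of vertices at distance exactly $i$ from $v$, and $\epsilon(v)$ is the maximum distance from $v$ to a vertex of $G$. *)

theory Defs
  imports "HOL-Analysis.Analysis"
begin

text \<open>A finite simple graph on the vertex type 'n (vertex set = UNIV, n = CARD('n)),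
  given by a symmetric irreflexive adjacency relation E.\<close>

definition simple_graph :: "('n \<Rightarrow> 'n \<Rightarrow> bool) \<Rightarrow> bool" where
  "simple_graph E \<longleftrightarrow> (\<forall>u v. E u v \<longrightarrow> E v u) \<and> (\<forall>u. \<not> E u u)"

definition graph_connected :: "('n \<Rightarrow> 'n \<Rightarrow> bool) \<Rightarrow> bool" where
  "graph_connected E \<longleftrightarrow> (\<forall>u v. E\<^sup>*\<^sup>* u v)"

definition gdist :: "('n \<Rightarrow> 'n \<Rightarrow> bool) \<Rightarrow> 'n \<Rightarrow> 'n \<Rightarrow> nat" where
  "gdist E u v = (LEAST k. (E ^^ k) u v)"

definition dist_set :: "('n \<Rightarrow> 'n \<Rightarrow> bool) \<Rightarrow> nat \<Rightarrow> 'n \<Rightarrow> 'n set" where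
  "dist_set E i v = {u. gdist E v u = i}"

definition ecc :: "('n::finite \<Rightarrow> 'n \<Rightarrow> bool) \<Rightarrow> 'n \<Rightarrow> nat" where
  "ecc E v = Max (range (gdist E v))"

definition independent_set :: "('n \<Rightarrow> 'n \<Rightarrow> bool) \<Rightarrow> 'n set \<Rightarrow> bool" where
  "independent_set E S \<longleftrightarrow> (\<forall>u\<in>S. \<forall>w\<in>S. \<not> E u w)"

definition sym_pattern :: "('n::finite \<Rightarrow> 'n \<Rightarrow> bool) \<Rightarrow> (real^'n^'n) set" where
  "sym_pattern E = {A. transpose A = A \<and> (\<forall>i j. i \<noteq> j \<longrightarrow> (A $ i $ j \<noteq> 0 \<longleftrightarrow> E i j))}"

definition eigenvalues :: "real^'n^'n \<Rightarrow> real set" where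
  "eigenvalues A = {c. \<exists>x. x \<noteq> 0 \<and> A *v x = c *\<^sub>R x}"

definition q_min :: "('n::finite \<Rightarrow> 'n \<Rightarrow> bool) \<Rightarrow> nat" where
  "q_min E = (LEAST k. \<exists>A\<in>sym_pattern E. card (eigenvalues A) = k)"

end

theory Submission imports Defs begin

text \<open>
  A real symmetric matrix with at most two eigenvalues \<open>l, m\<close> satisfies
  \<open>A\<^sup>2 = s A - p I\<close> with \<open>s = l + m\<close>, \<open>p = l m\<close>.
  The hypothesis on \<open>v\<close> makes \<open>G\<close> bipartite, the sides being the vertices at even and at odd
  distance from \<open>v\<close>. If \<open>A \<in> S(G)\<close> satisfies such a quadratic relation, comparing the \<open>(x, y)\<close>
  entries for an edge \<open>xy\<close> (no triangles) gives \<open>a\<^sub>x\<^sub>x + a\<^sub>y\<^sub>y = s\<close>, so the off-diagonal row weight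
  \<open>\<Sum>\<^sub>k\<^sub>\<noteq>\<^sub>u a\<^sub>u\<^sub>k\<^sup>2 = s a\<^sub>u\<^sub>u - a\<^sub>u\<^sub>u\<^sup>2 - p\<close> is the same positive number at every vertex.
  Summing it over one side counts each edge weight \<open>a\<^sub>u\<^sub>k\<^sup>2\<close> once, just as summing over the other
  side does, so both sides have the same size and \<open>n\<close> is even.
\<close>

section \<open>Real symmetric matrices with two eigenvalues\<close>

lemma symmetric_matrix_inner_commute:
  fixes A :: "real^'n^'n"
  assumes "transpose A = A"
  shows "x \<bullet> (A *v y) = (A *v x) \<bullet> y"
  by (metis assms dot_lmul_matrix transpose_matrix_vector)

lemma quadratic_form_attains_max_on_subspace:
  fixes A :: "real^'n^'n"
  assumes W: "subspace W" and "W \<noteq> {0}"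
  obtains x where "x \<in> W" "x \<bullet> x = 1" "\<And>y. y \<in> W \<Longrightarrow> y \<bullet> (A *v y) \<le> (x \<bullet> (A *v x)) * (y \<bullet> y)"
proof -
  define S where "S = W \<inter> sphere 0 1"
  have normalize_in_S: "(1 / norm y) *\<^sub>R y \<in> S" if "y \<in> W" "y \<noteq> 0" for y
    unfolding S_def using that W by (simp add: subspace_scale)
  obtain w where "w \<in> W" "w \<noteq> 0" using assms(2) subspace_0[OF W] by auto
  then have "S \<noteq> {}" using normalize_in_S by blast
  moreover have "compact S" unfolding S_def using closed_subspace[OF W] by (simp add: closed_Int_compact)
  moreover have "continuous_on S (\<lambda>y. y \<bullet> (A *v y))"
    by (intro continuous_intros linear_continuous_on)
      (auto simp: matrix_vector_mul_linear bounded_linear_inner_right)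
  ultimately have "\<exists>x\<in>S. \<forall>y\<in>S. y \<bullet> (A *v y) \<le> x \<bullet> (A *v x)"
    by (intro continuous_attains_sup)
  then obtain x where xS: "x \<in> S" and xmax: "\<And>y. y \<in> S \<Longrightarrow> y \<bullet> (A *v y) \<le> x \<bullet> (A *v x)"
    by blast
  have "y \<bullet> (A *v y) \<le> (x \<bullet> (A *v x)) * (y \<bullet> y)" if "y \<in> W" for y
  proof (cases "y = 0")
    case False
    have "(y \<bullet> (A *v y)) / (norm y)\<^sup>2 \<le> x \<bullet> (A *v x)"
      using xmax[OF normalize_in_S[OF that False]]
      by (simp add: matrix_vector_mult_scaleR power2_eq_square)
    moreover have "(norm y)\<^sup>2 = y \<bullet> y" "(norm y)\<^sup>2 > 0"
      using False by (simp_all add: power2_norm_eq_inner)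
    ultimately show ?thesis by (simp add: divide_le_eq mult.commute)
  qed simp
  moreover have "x \<in> W" "x \<bullet> x = 1" using xS by (auto simp: S_def norm_eq_1)
  ultimately show ?thesis using that by blast
qed

lemma rayleigh_maximizer_is_eigenvector:
  fixes A :: "real^'n^'n"
  assumes symA: "transpose A = A" and W: "subspace W"
    and inv: "\<And>y. y \<in> W \<Longrightarrow> A *v y \<in> W"
    and xW: "x \<in> W" and xx: "x \<bullet> x = 1"
    and max: "\<And>y. y \<in> W \<Longrightarrow> y \<bullet> (A *v y) \<le> (x \<bullet> (A *v x)) * (y \<bullet> y)"
  shows "A *v x = (x \<bullet> (A *v x)) *\<^sub>R x"
proof -
  define M where "M = x \<bullet> (A *v x)"
  define u where "u = A *v x - M *\<^sub>R x"
  have uW: "u \<in> W" unfolding u_def using inv[OF xW] xW W by (simp add: subspace_diff subspace_scale)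
  have xu: "x \<bullet> u = 0" unfolding u_def M_def using xx by (simp add: inner_diff_right)
  have "u = 0"
  proof (rule ccontr)
    assume "u \<noteq> 0"
    then have uu: "u \<bullet> u > 0" by simp
    define r where "r = M * (u \<bullet> u) - u \<bullet> (A *v u)"
    have r0: "r \<ge> 0" using max[OF uW] unfolding r_def M_def by simp
    text \<open>Perturb \<open>x\<close> to \<open>x + t u\<close>: the form gains \<open>2 t |u|\<^sup>2\<close> to first order, beating the maximum
      for small \<open>t > 0\<close>.\<close>
    define t where "t = (u \<bullet> u) / (r + 1)"
    have t0: "t > 0" and tr: "t * r < u \<bullet> u"
      unfolding t_def using uu r0 by (simp_all add: field_simps)
    have "A *v x = u + M *\<^sub>R x" unfolding u_def by simp
    then have Axu: "(A *v x) \<bullet> u = u \<bullet> u"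
      using xu by (simp add: inner_add_left inner_add_right inner_commute)
    have xAu: "x \<bullet> (A *v u) = u \<bullet> u"
      using Axu symmetric_matrix_inner_commute[OF symA] by metis
    have "x + t *\<^sub>R u \<in> W" using xW uW W by (simp add: subspace_add subspace_scale)
    from max[OF this, folded M_def]
    have "(x + t *\<^sub>R u) \<bullet> (A *v (x + t *\<^sub>R u)) \<le> M * ((x + t *\<^sub>R u) \<bullet> (x + t *\<^sub>R u))" .
    moreover have "(x + t *\<^sub>R u) \<bullet> (A *v (x + t *\<^sub>R u)) = M + 2 * t * (u \<bullet> u) + t\<^sup>2 * (u \<bullet> (A *v u))"
      using xAu Axu M_def
      by (simp add: matrix_vector_right_distrib matrix_vector_mult_scaleR inner_add_left
          inner_add_right inner_commute power2_eq_square algebra_simps)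
    moreover have "(x + t *\<^sub>R u) \<bullet> (x + t *\<^sub>R u) = 1 + t\<^sup>2 * (u \<bullet> u)"
      using xx xu by (simp add: inner_add_left inner_add_right inner_commute power2_eq_square algebra_simps)
    ultimately have "M + 2 * t * (u \<bullet> u) + t\<^sup>2 * (u \<bullet> (A *v u)) \<le> M * (1 + t\<^sup>2 * (u \<bullet> u))"
      by metis
    then have "t * (2 * (u \<bullet> u)) \<le> t * (t * r)"
      unfolding r_def by (simp add: power2_eq_square algebra_simps)
    then have "2 * (u \<bullet> u) \<le> t * r"
      using t0 by simp
    then show False using tr uu by simp
  qed
  then show ?thesis unfolding u_def M_def by simp
qed

lemma symmetric_invariant_subspace_has_eigenvector:
  fixes A :: "real^'n^'n"
  assumes "transpose A = A" and "subspace W" and "W \<noteq> {0}"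
    and "\<And>y. y \<in> W \<Longrightarrow> A *v y \<in> W"
  obtains x c where "x \<in> W" "x \<noteq> 0" "A *v x = c *\<^sub>R x"
proof -
  obtain x where "x \<in> W" "x \<bullet> x = 1"
    and "\<And>y. y \<in> W \<Longrightarrow> y \<bullet> (A *v y) \<le> (x \<bullet> (A *v x)) * (y \<bullet> y)"
    using quadratic_form_attains_max_on_subspace assms(2,3) by blast
  with rayleigh_maximizer_is_eigenvector[OF assms(1,2,4)] that show ?thesis
    by (metis inner_zero_left zero_neq_one)
qed

lemma finite_eigenvalues_symmetric:
  fixes A :: "real^'n^'n"
  assumes symA: "transpose A = A"
  shows "finite (eigenvalues A)"
proof -
  define ev where "ev c = (SOME x. x \<noteq> 0 \<and> A *v x = c *\<^sub>R x)" for c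
  have ev: "ev c \<noteq> 0 \<and> A *v ev c = c *\<^sub>R ev c" if "c \<in> eigenvalues A" for c
    using someI_ex[of "\<lambda>x. x \<noteq> 0 \<and> A *v x = c *\<^sub>R x"] that
    unfolding eigenvalues_def ev_def by blast
  have "inj_on ev (eigenvalues A)"
  proof (rule inj_onI)
    fix c d assume c: "c \<in> eigenvalues A" and d: "d \<in> eigenvalues A" and "ev c = ev d"
    then have "c *\<^sub>R ev c = d *\<^sub>R ev c" using ev by metis
    then show "c = d" using ev[OF c] by (simp add: scaleR_cancel_right)
  qed
  moreover have "pairwise orthogonal (ev ` eigenvalues A)"
  proof (clarsimp simp: pairwise_def)
    fix c d assume c: "c \<in> eigenvalues A" and d: "d \<in> eigenvalues A" and "ev c \<noteq> ev d"
    then have "c \<noteq> d" by blast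
    have "c * (ev c \<bullet> ev d) = ev c \<bullet> (A *v ev d)"
      using ev[OF c] symmetric_matrix_inner_commute[OF symA] by (metis inner_scaleR_left)
    also have "\<dots> = d * (ev c \<bullet> ev d)" using ev[OF d] by simp
    finally show "orthogonal (ev c) (ev d)"
      using \<open>c \<noteq> d\<close> by (simp add: orthogonal_def)
  qed
  moreover have "0 \<notin> ev ` eigenvalues A" using ev by force
  ultimately have "independent (ev ` eigenvalues A)"
    using pairwise_orthogonal_independent by blast
  then show ?thesis
    using independent_bound finite_imageD \<open>inj_on ev (eigenvalues A)\<close> by blast
qed

lemma symmetric_two_eigenvalues_quadratic:
  fixes A :: "real^'n^'n"
  assumes symA: "transpose A = A" and sub: "eigenvalues A \<subseteq> {l, m}"
  shows "A *v (A *v z) = (l + m) *\<^sub>R (A *v z) - (l * m) *\<^sub>R z"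
proof -
  define C where "C z = A *v (A *v z) - (l + m) *\<^sub>R (A *v z) + (l * m) *\<^sub>R z" for z
  have "linear C" by (rule linearI) (simp_all add: C_def algebra_simps)
  then have W: "subspace (range C)" by (metis linear_subspace_image subspace_UNIV)
  have C_self_adjoint: "x \<bullet> C y = C x \<bullet> y" for x y
    using symmetric_matrix_inner_commute[OF symA]
    by (simp add: C_def inner_diff_left inner_diff_right inner_add_left inner_add_right)
  text \<open>\<open>C = (A - l)(A - m)\<close> kills every eigenvector, in particular one inside its own
    \<open>A\<close>-invariant range; self-adjointness turns \<open>C (C w) = 0\<close> into \<open>C w = 0\<close>.\<close>
  have "range C = {0}"
  proof (rule ccontr)
    assume "range C \<noteq> {0}"
    moreover have "A *v C z \<in> range C" for z
      by (metis C_def rangeI matrix_vector_right_distrib matrix_vector_mult_diff_distrib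
          matrix_vector_mult_scaleR)
    ultimately obtain y c where "y \<in> range C" "y \<noteq> 0" "A *v y = c *\<^sub>R y"
      using symmetric_invariant_subspace_has_eigenvector[OF symA W] by blast
    then obtain w where Cw: "C w \<noteq> 0" "A *v C w = c *\<^sub>R C w" by blast
    then have "c = l \<or> c = m" using sub unfolding eigenvalues_def by blast
    then have "C (C w) = 0"
      unfolding C_def[of "C w"] using Cw(2) by (auto simp: algebra_simps)
    then have "C w \<bullet> C w = 0" using C_self_adjoint[of w "C w"] by simp
    then show False using Cw(1) by simp
  qed
  then have "C z = 0" by blast
  then show ?thesis unfolding C_def by (simp add: algebra_simps)
qed

lemma card_le_2_subset_doubleton:
  assumes "finite S" "card S \<le> 2"
  obtains l m where "S \<subseteq> {l, m}"
proof -
  have "card S = 0 \<or> card S = 1 \<or> card S = 2" using assms(2) by auto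
  then show ?thesis
    using assms(1) that by (auto simp: card_1_singleton_iff card_2_iff)
qed

section \<open>Distance layers\<close>

lemma gdist_walk:
  assumes "graph_connected E"
  shows "(E ^^ gdist E v u) v u"
proof -
  have "\<exists>k. (E ^^ k) v u" using assms rtranclp_power unfolding graph_connected_def by metis
  then show ?thesis unfolding gdist_def by (rule LeastI_ex)
qed

lemma gdist_eq_0_imp_eq: "graph_connected E \<Longrightarrow> gdist E v u = 0 \<Longrightarrow> u = v"
  using gdist_walk[of E v u] by simp

lemma gdist_edge_le:
  assumes "graph_connected E" "E x y"
  shows "gdist E v y \<le> gdist E v x + 1"
proof -
  have "(E ^^ Suc (gdist E v x)) v y" using relpowp_Suc_I[OF gdist_walk[OF assms(1)] assms(2)] .
  then show ?thesis unfolding gdist_def by (simp add: Least_le)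
qed

lemma gdist_le_ecc: "gdist E v u \<le> ecc E v"
  unfolding ecc_def by (rule Max_ge) auto

lemma independent_layers_edge_parity:
  fixes E :: "'n::finite \<Rightarrow> 'n \<Rightarrow> bool"
  assumes sg: "simple_graph E" and con: "graph_connected E"
    and ind: "\<forall>i\<in>{1..ecc E v}. independent_set E (dist_set E i v)"
    and e: "E x y"
  shows "odd (gdist E v x + gdist E v y)"
proof -
  have "E y x" "x \<noteq> y" using sg e unfolding simple_graph_def by blast+
  have "gdist E v x \<noteq> gdist E v y"
  proof
    assume eq: "gdist E v x = gdist E v y"
    define i where "i = gdist E v x"
    have "i \<noteq> 0" using gdist_eq_0_imp_eq[OF con] eq \<open>x \<noteq> y\<close> unfolding i_def by metis
    then have "independent_set E (dist_set E i v)"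
      using ind gdist_le_ecc unfolding i_def by (metis atLeastAtMost_iff less_one not_le)
    moreover have "x \<in> dist_set E i v" "y \<in> dist_set E i v"
      using eq unfolding dist_set_def i_def by auto
    ultimately show False using e unfolding independent_set_def by blast
  qed
  moreover have "gdist E v y \<le> gdist E v x + 1" "gdist E v x \<le> gdist E v y + 1"
    using gdist_edge_le[OF con] e \<open>E y x\<close> by blast+
  ultimately have "gdist E v y = gdist E v x + 1 \<or> gdist E v x = gdist E v y + 1" by linarith
  then show ?thesis by auto
qed

lemma graph_connected_edge_invariant_const:
  assumes "graph_connected E" and "\<And>x y. E x y \<Longrightarrow> f x = f y"
  shows "f u = f v"
proof -
  have "E\<^sup>*\<^sup>* v u" using assms(1) unfolding graph_connected_def by blast
  then show ?thesis by (induction rule: rtranclp_induct) (use assms(2) in auto)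
qed

lemma graph_connected_has_neighbour:
  fixes E :: "'n::finite \<Rightarrow> 'n \<Rightarrow> bool"
  assumes "graph_connected E" and "CARD('n) \<ge> 2"
  obtains w where "E v w"
proof -
  have "\<exists>a b :: 'n. a \<noteq> b"
    using assms(2) card_le_Suc0_iff_eq[of "UNIV :: 'n set"] by (auto simp: not_le[symmetric])
  then obtain u where "u \<noteq> v" by metis
  moreover have "E\<^sup>*\<^sup>* v u" using assms(1) unfolding graph_connected_def by blast
  ultimately show ?thesis using that by (metis converse_rtranclpE)
qed

section \<open>Bipartite patterns and quadratic relations\<close>

definition offdiag_row_sqsum :: "real^'n^'n \<Rightarrow> 'n \<Rightarrow> real" where
  "offdiag_row_sqsum A u = (\<Sum>k\<in>-{u}. (A $ u $ k)\<^sup>2)"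

lemma sym_pattern_symmetric: "A \<in> sym_pattern E \<Longrightarrow> A $ i $ j = A $ j $ i"
  unfolding sym_pattern_def by (metis (mono_tags, lifting) mem_Collect_eq transpose_def vec_lambda_beta)

lemma matrix_quadratic_entries:
  fixes A :: "real^'n^'n"
  assumes "\<And>z. A *v (A *v z) = s *\<^sub>R (A *v z) - p *\<^sub>R z"
  shows "(\<Sum>k\<in>UNIV. A $ i $ k * A $ k $ j) = s * A $ i $ j - (if i = j then p else 0)"
proof -
  have "(A *v column j A) $ i = (s *\<^sub>R column j A - p *\<^sub>R axis j 1) $ i"
    using assms by (simp flip: matrix_vector_mult_basis)
  then show ?thesis
    by (simp add: matrix_vector_mult_def column_def axis_def)
qed

locale bipartite_quadratic_pattern =
  fixes E :: "'n::finite \<Rightarrow> 'n \<Rightarrow> bool" and side :: "'n \<Rightarrow> bool"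
    and A :: "real^'n^'n" and s p :: real
  assumes simple: "simple_graph E"
    and bipartite: "\<And>x y. E x y \<Longrightarrow> side x \<noteq> side y"
    and pattern: "A \<in> sym_pattern E"
    and quadratic: "\<And>z. A *v (A *v z) = s *\<^sub>R (A *v z) - p *\<^sub>R z"
begin

lemma entry_nonzero_iff: "i \<noteq> j \<Longrightarrow> A $ i $ j \<noteq> 0 \<longleftrightarrow> E i j"
  using pattern unfolding sym_pattern_def by blast

lemma edge_diag_sum:
  assumes e: "E x y"
  shows "A $ x $ x + A $ y $ y = s"
proof -
  have "x \<noteq> y" using simple e unfolding simple_graph_def by blast
  text \<open>A bipartite graph has no triangles, so only \<open>k \<in> {x, y}\<close> contribute to \<open>(A\<^sup>2)\<^sub>x\<^sub>y\<close>.\<close>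
  have "A $ x $ k * A $ k $ y = 0" if "k \<notin> {x, y}" for k
    using that bipartite[OF e] bipartite[of x k] bipartite[of k y] entry_nonzero_iff by fastforce
  then have "(\<Sum>k\<in>UNIV. A $ x $ k * A $ k $ y) = (\<Sum>k\<in>{x, y}. A $ x $ k * A $ k $ y)"
    by (intro sum.mono_neutral_right) auto
  then have "A $ x $ y * (A $ x $ x + A $ y $ y) = A $ x $ y * s"
    using matrix_quadratic_entries[OF quadratic, of x y] \<open>x \<noteq> y\<close> by (simp add: algebra_simps)
  moreover have "A $ x $ y \<noteq> 0" using entry_nonzero_iff \<open>x \<noteq> y\<close> e by blast
  ultimately show ?thesis by simp
qed

lemma offdiag_row_sqsum_eq: "offdiag_row_sqsum A u = s * A $ u $ u - (A $ u $ u)\<^sup>2 - p"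
proof -
  have "(\<Sum>k\<in>UNIV. A $ u $ k * A $ k $ u) = (\<Sum>k\<in>UNIV. (A $ u $ k)\<^sup>2)"
    using sym_pattern_symmetric[OF pattern] by (simp add: power2_eq_square)
  also have "\<dots> = (A $ u $ u)\<^sup>2 + offdiag_row_sqsum A u"
    unfolding offdiag_row_sqsum_def by (simp add: sum.remove Compl_eq_Diff_UNIV)
  finally show ?thesis using matrix_quadratic_entries[OF quadratic, of u u] by simp
qed

text \<open>\<open>a \<mapsto> s a - a\<^sup>2\<close> is invariant under \<open>a \<mapsto> s - a\<close>, which is how the diagonal changes along an
  edge.\<close>

lemma offdiag_row_sqsum_edge: "E x y \<Longrightarrow> offdiag_row_sqsum A x = offdiag_row_sqsum A y"
proof -
  assume "E x y"
  then have "A $ y $ y = s - A $ x $ x" using edge_diag_sum[of x y] by simp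
  then show ?thesis by (simp only: offdiag_row_sqsum_eq) (simp add: power2_eq_square algebra_simps)
qed

lemma offdiag_row_sqsum_other_side:
  "offdiag_row_sqsum A u = (\<Sum>k\<in>{k. side k \<noteq> side u}. (A $ u $ k)\<^sup>2)"
  unfolding offdiag_row_sqsum_def
proof (rule sum.mono_neutral_cong)
  show "(A $ u $ k)\<^sup>2 = 0" if "k \<in> -{u} - {k. side k \<noteq> side u}" for k
    using that bipartite[of u k] entry_nonzero_iff[of u k] by auto
qed auto

lemma balanced_sides:
  assumes con: "graph_connected E" and "CARD('n) \<ge> 2"
  shows "card {u. side u} = card {u. \<not> side u}"
proof -
  fix u :: 'n
  define c where "c = offdiag_row_sqsum A u"
  have const: "offdiag_row_sqsum A x = c" for x
    unfolding c_def by (rule graph_connected_edge_invariant_const[OF con offdiag_row_sqsum_edge])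
  obtain w where "E u w" using graph_connected_has_neighbour[OF assms] .
  then have "u \<noteq> w" using simple unfolding simple_graph_def by blast
  have "0 < (A $ u $ w)\<^sup>2" using entry_nonzero_iff \<open>u \<noteq> w\<close> \<open>E u w\<close> by simp
  also have "\<dots> \<le> offdiag_row_sqsum A u" unfolding offdiag_row_sqsum_def
    using \<open>u \<noteq> w\<close> by (intro member_le_sum) auto
  finally have "c > 0" unfolding c_def .
  define X Y where "X = {u. side u}" and "Y = {u. \<not> side u}"
  text \<open>Both sums add up \<open>a\<^sub>x\<^sub>y\<^sup>2\<close> over all \<open>x \<in> X\<close>, \<open>y \<in> Y\<close>.\<close>
  have row_X: "(\<Sum>y\<in>Y. (A $ x $ y)\<^sup>2) = c" if "x \<in> X" for x
    using that const[of x] offdiag_row_sqsum_other_side[of x] unfolding X_def Y_def by simp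
  have row_Y: "(\<Sum>x\<in>X. (A $ y $ x)\<^sup>2) = c" if "y \<in> Y" for y
    using that const[of y] offdiag_row_sqsum_other_side[of y] unfolding X_def Y_def by simp
  have "real (card X) * c = (\<Sum>x\<in>X. \<Sum>y\<in>Y. (A $ x $ y)\<^sup>2)" using row_X by simp
  also have "\<dots> = (\<Sum>y\<in>Y. \<Sum>x\<in>X. (A $ y $ x)\<^sup>2)"
    using sym_pattern_symmetric[OF pattern] by (subst sum.swap) simp
  also have "\<dots> = real (card Y) * c" using row_Y by simp
  finally show ?thesis using \<open>c > 0\<close> unfolding X_def Y_def by simp
qed

lemma even_card:
  assumes "graph_connected E" and "CARD('n) \<ge> 2"
  shows "even CARD('n)"
proof -
  have "card {u. side u} + card {u. \<not> side u} = card ({u. side u} \<union> {u. \<not> side u})"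
    by (rule card_Un_disjoint[symmetric]) auto
  moreover have "{u. side u} \<union> {u. \<not> side u} = UNIV" by blast
  ultimately show ?thesis using balanced_sides[OF assms] by (metis dvd_triv_left mult_2)
qed

end

lemma q_min_attained:
  fixes E :: "'n::finite \<Rightarrow> 'n \<Rightarrow> bool"
  assumes "simple_graph E"
  shows "\<exists>A\<in>sym_pattern E. card (eigenvalues A) = q_min E"
proof -
  have "(\<chi> i j. if E i j then 1 else 0) \<in> sym_pattern E"
    using assms by (auto simp: sym_pattern_def transpose_def vec_eq_iff simple_graph_def)
  then have "\<exists>k. \<exists>A\<in>sym_pattern E. card (eigenvalues A) = k" by blast
  then show ?thesis unfolding q_min_def by (rule LeastI_ex)
qed

theorem mainTheorem10:
  fixes E :: "'n::finite \<Rightarrow> 'n \<Rightarrow> bool"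
  assumes "simple_graph E"
    and "graph_connected E"
    and "odd CARD('n)"
    and "CARD('n) \<ge> 3"
    and "\<exists>v. \<forall>i\<in>{1..ecc E v}. independent_set E (dist_set E i v)"
  shows "q_min E \<ge> 3"
proof (rule ccontr)
  assume "\<not> q_min E \<ge> 3"
  moreover obtain A where A: "A \<in> sym_pattern E" "card (eigenvalues A) = q_min E"
    using q_min_attained[OF assms(1)] by blast
  moreover have symA: "transpose A = A" using A(1) unfolding sym_pattern_def by blast
  ultimately have "card (eigenvalues A) \<le> 2" by simp
  then obtain l m where "eigenvalues A \<subseteq> {l, m}"
    using card_le_2_subset_doubleton finite_eigenvalues_symmetric[OF symA] by blast
  note quadratic = symmetric_two_eigenvalues_quadratic[OF symA this]
  obtain v where v: "\<forall>i\<in>{1..ecc E v}. independent_set E (dist_set E i v)" using assms(5) by blast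
  define side where "side u = even (gdist E v u)" for u
  have "bipartite_quadratic_pattern E side A (l + m) (l * m)"
    using assms(1) A(1) quadratic independent_layers_edge_parity[OF assms(1,2) v]
    by unfold_locales (auto simp: side_def)
  then have "even CARD('n)"
    using bipartite_quadratic_pattern.even_card assms(2,4) by fastforce
  then show False using assms(3) by simp
qed

end
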